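(* Let $A$ be a finite set and let $(v_{xy})$ be a Llull matrix on $A$ with CLC structure, and let $\xi$ be an admissible order for it (write $x <_\xi y$ when $x$ precedes $y$ in $\xi$). Then for all $x,y,z\in A$ with $x <_\xi y$ and $z\notin\{x,y\}$: $$v_{xz}\ge v_{yz},\qquad v_{zx}\le v_{zy},\qquad t_{xz}\ge t_{yz},\qquad t_{zx}\ge t_{zy}.$$
   Context: A Llull matrix on a finite set $A$ is an assignment to each ordered pair of distinct elements $x\neq y$ of $A$ of a number $v_{xy}\in[0,1]$ such that $v_{xy}+v_{yx}\le 1$. Its turnouts are $t_{xy}=v_{xy}+v_{yx}$ and its margins are $m_{xy}=v_{xy}-v_{yx}$. The matrix has CLC structure if there is a total order $\xi$ on $A$ (called an admissible order) such that, writing $x<_\xi y$ when $x$ precedes $y$ and $x'$ for the element immediately following $x$ in $\xi$ (when it exists): (i) $v_{xy}\ge v_{yx}$ whenever $x<_\xi y$; (ii) $v_{xz}=\max(v_{xy},v_{yz})$ whenever $x<_\xi y<_\xi z$; (iii) $v_{zx}=\min(v_{zy},v_{yx})$ whenever $x<_\xi y<_\xi z$; (iv) $0\le t_{xz}-t_{x'z}\le m_{xx'}$ whenever $x$ has an immediate successor $x'$ and $z\notin\{x,x'\}$. *)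

theory Defs
  imports Complex_Main
begin

definition llull :: "'a set \<Rightarrow> ('a \<Rightarrow> 'a \<Rightarrow> real) \<Rightarrow> bool" where
  "llull A v \<longleftrightarrow> (\<forall>x\<in>A. \<forall>y\<in>A. x \<noteq> y \<longrightarrow>
      0 \<le> v x y \<and> v x y \<le> 1 \<and> v x y + v y x \<le> 1)"

definition turnout :: "('a \<Rightarrow> 'a \<Rightarrow> real) \<Rightarrow> 'a \<Rightarrow> 'a \<Rightarrow> real" where
  "turnout v x y = v x y + v y x"

definition margin :: "('a \<Rightarrow> 'a \<Rightarrow> real) \<Rightarrow> 'a \<Rightarrow> 'a \<Rightarrow> real" where
  "margin v x y = v x y - v y x"

definition strict_total_order_on :: "'a set \<Rightarrow> ('a \<Rightarrow> 'a \<Rightarrow> bool) \<Rightarrow> bool" where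
  "strict_total_order_on A lt \<longleftrightarrow>
     (\<forall>x\<in>A. \<not> lt x x) \<and>
     (\<forall>x\<in>A. \<forall>y\<in>A. \<forall>z\<in>A. lt x y \<and> lt y z \<longrightarrow> lt x z) \<and>
     (\<forall>x\<in>A. \<forall>y\<in>A. x \<noteq> y \<longrightarrow> lt x y \<or> lt y x)"

definition immediate_succ :: "'a set \<Rightarrow> ('a \<Rightarrow> 'a \<Rightarrow> bool) \<Rightarrow> 'a \<Rightarrow> 'a \<Rightarrow> bool" where
  "immediate_succ A lt x x' \<longleftrightarrow> x \<in> A \<and> x' \<in> A \<and> lt x x' \<and>
     \<not> (\<exists>y\<in>A. lt x y \<and> lt y x')"

definition admissible_order :: "'a set \<Rightarrow> ('a \<Rightarrow> 'a \<Rightarrow> real) \<Rightarrow> ('a \<Rightarrow> 'a \<Rightarrow> bool) \<Rightarrow> bool" where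
  "admissible_order A v lt \<longleftrightarrow>
     strict_total_order_on A lt \<and>
     (\<forall>x\<in>A. \<forall>y\<in>A. lt x y \<longrightarrow> v x y \<ge> v y x) \<and>
     (\<forall>x\<in>A. \<forall>y\<in>A. \<forall>z\<in>A. lt x y \<and> lt y z \<longrightarrow> v x z = max (v x y) (v y z)) \<and>
     (\<forall>x\<in>A. \<forall>y\<in>A. \<forall>z\<in>A. lt x y \<and> lt y z \<longrightarrow> v z x = min (v z y) (v y x)) \<and>
     (\<forall>x x' z. immediate_succ A lt x x' \<and> z \<in> A \<and> z \<noteq> x \<and> z \<noteq> x' \<longrightarrow>
        0 \<le> turnout v x z - turnout v x' z \<and>
        turnout v x z - turnout v x' z \<le> margin v x x')"

definition has_CLC :: "'a set \<Rightarrow> ('a \<Rightarrow> 'a \<Rightarrow> real) \<Rightarrow> bool" where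
  "has_CLC A v \<longleftrightarrow> (\<exists>lt. admissible_order A v lt)"

end

theory Submission
  imports Defs
begin

text \<open>
  Condition (iv) says that the turnout against a fixed third candidate does not increase along a
  single step of the order; induction on the number of candidates strictly between x and y chains
  such steps, and a candidate w lying between them is crossed by comparing its two neighbours
  with each other. For the values, if z lies outside the interval from x to y, conditions (ii)
  and (iii) give the claim at once. If z lies between them, splitting the interval at another
  point reduces to the case where z is the only candidate between x and y; there (ii), (iii) and
  the margin bound of (iv) for the step from x to z rule out v z x > v z y, and v x z \<ge> v y z
  then follows from the turnout inequality.
\<close>

lemma strict_total_order_onD:
  assumes "strict_total_order_on A lt"
  shows "x \<in> A \<Longrightarrow> \<not> lt x x"
    and "\<lbrakk>x \<in> A; y \<in> A; z \<in> A; lt x y; lt y z\<rbrakk> \<Longrightarrow> lt x z"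
    and "\<lbrakk>x \<in> A; y \<in> A; x \<noteq> y\<rbrakk> \<Longrightarrow> lt x y \<or> lt y x"
  using assms unfolding strict_total_order_on_def by blast+

lemma between_induct [consumes 5, case_names step]:
  assumes "finite A" and sto: "strict_total_order_on A lt"
    and "x \<in> A" "y \<in> A" "lt x y"
    and step: "\<And>x y. \<lbrakk>x \<in> A; y \<in> A; lt x y;
                 \<And>u. \<lbrakk>u \<in> A; lt x u; lt u y\<rbrakk> \<Longrightarrow> P x u \<and> P u y\<rbrakk> \<Longrightarrow> P x y"
  shows "P x y"
  using assms(3-5)
proof (induction "card {u \<in> A. lt x u \<and> lt u y}" arbitrary: x y rule: less_induct)
  case less
  note irrefl = strict_total_order_onD(1)[OF sto] and trans = strict_total_order_onD(2)[OF sto]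
  have fin: "finite {w \<in> A. lt x w \<and> lt w y}" using \<open>finite A\<close> by simp
  show ?case
  proof (rule step[OF less.prems])
    fix u assume u: "u \<in> A" "lt x u" "lt u y"
    have "{w \<in> A. lt x w \<and> lt w u} \<subset> {w \<in> A. lt x w \<and> lt w y}"
      using u less.prems trans irrefl by blast
    then have "P x u"
      using less.hyps[OF psubset_card_mono[OF fin] less.prems(1) u(1,2)] by blast
    moreover have "{w \<in> A. lt u w \<and> lt w y} \<subset> {w \<in> A. lt x w \<and> lt w y}"
      using u less.prems trans irrefl by blast
    then have "P u y"
      using less.hyps[OF psubset_card_mono[OF fin] u(1) less.prems(2) u(3)] by blast
    ultimately show "P x u \<and> P u y" ..
  qed
qed

lemma immediate_succI:
  "\<lbrakk>x \<in> A; y \<in> A; lt x y; \<And>u. \<lbrakk>u \<in> A; lt x u; lt u y\<rbrakk> \<Longrightarrow> False\<rbrakk> \<Longrightarrow> immediate_succ A lt x y"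
  unfolding immediate_succ_def by blast

lemma between_cases [consumes 5, case_names split around adjacent]:
  assumes sto: "strict_total_order_on A lt"
    and "x \<in> A" "y \<in> A" "w \<in> A" "lt x y"
  obtains (split) u where "u \<in> A" "lt x u" "lt u y" "u \<noteq> w"
    | (around) "immediate_succ A lt x w" "immediate_succ A lt w y"
    | (adjacent) "immediate_succ A lt x y"
proof (cases "\<exists>u\<in>A. lt x u \<and> lt u y \<and> u \<noteq> w")
  case True
  then show ?thesis using split by blast
next
  case no_other: False
  note irrefl = strict_total_order_onD(1)[OF sto] and trans = strict_total_order_onD(2)[OF sto]
  show ?thesis
  proof (cases "lt x w \<and> lt w y")
    case True
    have "immediate_succ A lt x w"
      by (rule immediate_succI) (use assms True no_other irrefl trans in blast)+
    moreover have "immediate_succ A lt w y"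
      by (rule immediate_succI) (use assms True no_other irrefl trans in blast)+
    ultimately show ?thesis by (rule around)
  next
    case False
    have "immediate_succ A lt x y"
      by (rule immediate_succI) (use assms False no_other in blast)+
    then show ?thesis by (rule adjacent)
  qed
qed

lemma admissible_orderD:
  assumes "admissible_order A v lt"
  shows "strict_total_order_on A lt"
    and "\<lbrakk>x \<in> A; y \<in> A; lt x y\<rbrakk> \<Longrightarrow> v y x \<le> v x y"
    and "\<lbrakk>x \<in> A; y \<in> A; z \<in> A; lt x y; lt y z\<rbrakk> \<Longrightarrow> v x z = max (v x y) (v y z)"
    and "\<lbrakk>x \<in> A; y \<in> A; z \<in> A; lt x y; lt y z\<rbrakk> \<Longrightarrow> v z x = min (v z y) (v y x)"
    and "\<lbrakk>immediate_succ A lt x x'; z \<in> A; z \<noteq> x; z \<noteq> x'\<rbrakk> \<Longrightarrow> turnout v x' z \<le> turnout v x z"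
    and "\<lbrakk>immediate_succ A lt x x'; z \<in> A; z \<noteq> x; z \<noteq> x'\<rbrakk> \<Longrightarrow>
           turnout v x z - turnout v x' z \<le> margin v x x'"
  using assms unfolding admissible_order_def by auto

lemma turnout_commute: "turnout v x y = turnout v y x"
  by (simp add: turnout_def)

lemma turnout_antimono:
  assumes "finite A" and adm: "admissible_order A v lt"
    and "x \<in> A" "y \<in> A" "w \<in> A" "lt x y" "w \<noteq> x" "w \<noteq> y"
  shows "turnout v y w \<le> turnout v x w"
proof -
  note sto = admissible_orderD(1)[OF adm]
  note turnout_step = admissible_orderD(5)[OF adm]
  have "w \<noteq> x \<longrightarrow> w \<noteq> y \<longrightarrow> turnout v y w \<le> turnout v x w"
    using \<open>finite A\<close> sto \<open>x \<in> A\<close> \<open>y \<in> A\<close> \<open>lt x y\<close>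
  proof (induction rule: between_induct)
    case (step x y)
    show ?case
    proof (intro impI)
      assume "w \<noteq> x" "w \<noteq> y"
      from sto step(1,2) \<open>w \<in> A\<close> step(3)
      show "turnout v y w \<le> turnout v x w"
      proof (cases rule: between_cases)
        case (split u)
        then show ?thesis using step(4)[OF split(1-3)] split(4) \<open>w \<noteq> x\<close> \<open>w \<noteq> y\<close> by fastforce
      next
        case around
        have "x \<noteq> y" using step(1-3) strict_total_order_onD(1)[OF sto] by blast
        have "turnout v y w \<le> turnout v x y"
          using turnout_step[OF around(1) step(2)] \<open>x \<noteq> y\<close> \<open>w \<noteq> y\<close> by (simp add: turnout_commute)
        also have "\<dots> \<le> turnout v x w"
          using turnout_step[OF around(2) step(1)] \<open>x \<noteq> y\<close> \<open>w \<noteq> x\<close> by (simp add: turnout_commute)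
        finally show ?thesis .
      next
        case adjacent
        then show ?thesis using turnout_step \<open>w \<in> A\<close> \<open>w \<noteq> x\<close> \<open>w \<noteq> y\<close> by blast
      qed
    qed
  qed
  then show ?thesis using assms by blast
qed

lemma value_from_between_mono:
  assumes "finite A" and adm: "admissible_order A v lt"
    and "x \<in> A" "y \<in> A" "z \<in> A" "lt x z" "lt z y"
  shows "v z x \<le> v z y"
proof -
  note sto = admissible_orderD(1)[OF adm]
  note trans = strict_total_order_onD(2)[OF sto] and total = strict_total_order_onD(3)[OF sto]
  have "lt x y" using assms trans by blast
  have "lt x z \<longrightarrow> lt z y \<longrightarrow> v z x \<le> v z y"
    using \<open>finite A\<close> sto \<open>x \<in> A\<close> \<open>y \<in> A\<close> \<open>lt x y\<close>
  proof (induction rule: between_induct)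
    case (step x y)
    show ?case
    proof (intro impI)
      assume "lt x z" "lt z y"
      from sto step(1,2) \<open>z \<in> A\<close> step(3)
      show "v z x \<le> v z y"
      proof (cases rule: between_cases)
        case (split u)
        consider "lt u z" | "lt z u" using total split(1,4) \<open>z \<in> A\<close> by blast
        then show ?thesis
        proof cases
          case 1
          have "v z x \<le> v z u"
            using admissible_orderD(4)[OF adm step(1) split(1) \<open>z \<in> A\<close> split(2) 1] by simp
          also have "\<dots> \<le> v z y" using step(4)[OF split(1-3)] 1 \<open>lt z y\<close> by blast
          finally show ?thesis .
        next
          case 2
          have "v z x \<le> v z u" using step(4)[OF split(1-3)] 2 \<open>lt x z\<close> by blast
          also have "\<dots> \<le> v z y"
            using admissible_orderD(3)[OF adm \<open>z \<in> A\<close> split(1) step(2) 2 split(3)] by simp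
          finally show ?thesis .
        qed
      next
        case around
        have "y \<noteq> x" "y \<noteq> z"
          using step(1-3) \<open>lt z y\<close> strict_total_order_onD(1)[OF sto] by blast+
        have step_bound: "turnout v x y - turnout v z y \<le> margin v x z"
          using admissible_orderD(6)[OF adm around(1) step(2)] \<open>y \<noteq> x\<close> \<open>y \<noteq> z\<close> by blast
        have "v x y = max (v x z) (v z y)" "v y x = min (v y z) (v z x)"
          using admissible_orderD(3,4)[OF adm step(1) \<open>z \<in> A\<close> step(2) \<open>lt x z\<close> \<open>lt z y\<close>] by simp_all
        moreover have "v z x \<le> v x z" "v y z \<le> v z y"
          using admissible_orderD(2)[OF adm] step(1,2) \<open>z \<in> A\<close> \<open>lt x z\<close> \<open>lt z y\<close> by blast+
        \<comment> \<open>If v z x > v z y, then v x y = v x z and v y x = v y z, so the step x \<rightarrow> z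
            decreases the turnout against y by v x z - v z y, more than the margin v x z - v z x.\<close>
        ultimately show ?thesis
          using step_bound unfolding turnout_def margin_def by (auto simp: max_def min_def split: if_splits)
      next
        case adjacent
        then show ?thesis using \<open>z \<in> A\<close> \<open>lt x z\<close> \<open>lt z y\<close> by (auto simp: immediate_succ_def)
      qed
    qed
  qed
  then show ?thesis using assms by blast
qed

theorem lemma3p2:
  fixes A :: "'a set" and v :: "'a \<Rightarrow> 'a \<Rightarrow> real" and lt :: "'a \<Rightarrow> 'a \<Rightarrow> bool"
  assumes "finite A"
    and "llull A v"
    and "has_CLC A v"
    and "admissible_order A v lt"
    and "x \<in> A" and "y \<in> A" and "z \<in> A"
    and "lt x y" and "z \<noteq> x" and "z \<noteq> y"
  shows "v x z \<ge> v y z \<and> v z x \<le> v z y \<and>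
         turnout v x z \<ge> turnout v y z \<and> turnout v z x \<ge> turnout v z y"
proof -
  note adm = \<open>admissible_order A v lt\<close>
  have turnouts: "turnout v y z \<le> turnout v x z"
    using turnout_antimono[OF \<open>finite A\<close> adm] assms(5-10) .
  consider "lt z x" | "lt x z" "lt z y" | "lt y z"
    using strict_total_order_onD(3)[OF admissible_orderD(1)[OF adm]] assms(5-7,9,10) by blast
  then have "v y z \<le> v x z \<and> v z x \<le> v z y"
  proof cases
    case 1
    then show ?thesis using admissible_orderD(3,4)[OF adm \<open>z \<in> A\<close> \<open>x \<in> A\<close> \<open>y \<in> A\<close> 1 \<open>lt x y\<close>] by simp
  next
    case 2
    have "v z x \<le> v z y" using value_from_between_mono[OF \<open>finite A\<close> adm assms(5-7) 2] .
    with turnouts show ?thesis unfolding turnout_def by linarith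
  next
    case 3
    then show ?thesis using admissible_orderD(3,4)[OF adm \<open>x \<in> A\<close> \<open>y \<in> A\<close> \<open>z \<in> A\<close> \<open>lt x y\<close> 3] by simp
  qed
  with turnouts show ?thesis by (simp add: turnout_commute)
qed

end
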